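(* For every $\mathcal{L}_{A}^{\Box}$-formula $\varphi$: if $\varphi$ is $\mathsf{LK(A)}$-derivable (i.e. there is a closed $\mathsf{LK(A)}$-tableau for $\varphi$), then $\varphi$ is $\mathsf{K(A)}$-valid.
   Context: $\mathcal{L}_{A}^{\Box}$-formulas are built from a countably infinite set $\mathrm{Var}$ of variables with binary $\wedge,\vee,\&,\to$, constant $\overline{0}$, unary $\Box$. A $\mathsf{K(A)}$-model $\langle W,R,V\rangle$: nonempty $W$, $R\subseteq W\times W$, $V\colon\mathrm{Var}\times W\to[-r,r]$ for some real $r\ge0$, extended by $\wedge=\min$, $\vee=\max$, $\&=+$, $V(\varphi\to\psi,x)=V(\psi,x)-V(\varphi,x)$, $V(\overline{0},x)=0$, $V(\Box\varphi,x)=\inf_{\mathbb{R}}\{V(\varphi,y):Rxy\}$ (empty infimum $=0$). $\varphi$ is $\mathsf{K(A)}$-valid if $V(\varphi,x)\ge0$ for all models and worlds. Tableau calculus $\mathsf{LK(A)}$: a labelled formula is a pair $\varphi^{k}$ of a formula and a natural number. Nodes are either labelled inequations $\Gamma\rhd\Delta$, with $\rhd\in\{>,\ge\}$ and $\Gamma,\Delta$ finite multisets of labelled formulas, or relations $rij$ with $i,j\in\mathbb{N}$. A tableau is a finite tree of nodes grown by the rules below: if the nodes above the line occur on a branch $B$, $B$ may be extended by the nodes below (all on $B$), except for the branching rules, where $B$ splits into two branches each extended by one of the listed alternatives; $\rhd$ is the same in premise and conclusion. Rules: ($\overline{0}\rhd$) from $\Gamma,\overline{0}^{i}\rhd\Delta$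 add $\Gamma\rhd\Delta$; ($\rhd\overline{0}$) from $\Gamma\rhd\overline{0}^{i},\Delta$ add $\Gamma\rhd\Delta$; ($\&\rhd$) from $\Gamma,(\varphi\&\psi)^{i}\rhd\Delta$ add $\Gamma,\varphi^{i},\psi^{i}\rhd\Delta$; ($\rhd\&$) from $\Gamma\rhd(\varphi\&\psi)^{i},\Delta$ add $\Gamma\rhd\varphi^{i},\psi^{i},\Delta$; ($\to\rhd$) from $\Gamma,(\varphi\to\psi)^{i}\rhd\Delta$ add $\Gamma,\psi^{i}\rhd\varphi^{i},\Delta$; ($\rhd\to$) from $\Gamma\rhd(\varphi\to\psi)^{i},\Delta$ add $\Gamma,\varphi^{i}\rhd\psi^{i},\Delta$; ($\wedge\rhd$) from $\Gamma,(\varphi\wedge\psi)^{i}\rhd\Delta$ add both $\Gamma,\varphi^{i}\rhd\Delta$ and $\Gamma,\psi^{i}\rhd\Delta$; ($\rhd\wedge$, branching) from $\Gamma\rhd(\varphi\wedge\psi)^{i},\Delta$ branch into $\Gamma\rhd\varphi^{i},\Delta$ or $\Gamma\rhd\psi^{i},\Delta$; ($\vee\rhd$, branching) from $\Gamma,(\varphi\vee\psi)^{i}\rhd\Delta$ branch into $\Gamma,\varphi^{i}\rhd\Delta$ or $\Gamma,\psi^{i}\rhd\Delta$; ($\rhd\vee$) from $\Gamma\rhd(\varphi\vee\psi)^{i},\Delta$ add both $\Gamma\rhd\varphi^{i},\Delta$ and $\Gamma\rhd\psi^{i},\Delta$; ($\Box\rhd$) from $rij$ and $\Gamma,(\Box\varphi)^{i}\rhd\Delta$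 add $\varphi^{j}\ge(\Box\varphi)^{i}$; ($\rhd\Box$) from $\Gamma\rhd(\Box\varphi)^{i},\Delta$ add $(\Box\varphi)^{i}\ge\varphi^{j}$ and $rij$ for a new label $j$; (ex) from $rik$ add $rkj$ for a new label $j$. The system of inequations associated to a branch consists of the labelled inequations on it containing only labelled formulas of the form $p^{i}$ ($p\in\mathrm{Var}$) or $(\Box\psi)^{i}$, each regarded as a real variable, each inequation read as an inequality between the sums of these variables (empty sum $=0$). A branch is closed if this system has no solution over $\mathbb{R}$; a tableau is closed if all its branches are closed. A tableau for $\varphi$ is one whose root is $[\,]>[\varphi^{1}]$ followed by the node $r12$; $\varphi$ is $\mathsf{LK(A)}$-derivable if there is a closed tableau for $\varphi$. *)

theory Defs
  imports Complex_Main "HOL-Library.Multiset"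
begin

datatype fm =
    Atom nat
  | Conj fm fm
  | Disj fm fm
  | Fus fm fm
  | Imp fm fm
  | Zero
  | Box fm

primrec eval :: "'w set \<Rightarrow> ('w \<times> 'w) set \<Rightarrow> (nat \<Rightarrow> 'w \<Rightarrow> real) \<Rightarrow> fm \<Rightarrow> 'w \<Rightarrow> real" where
  "eval W R V (Atom p) x = V p x"
| "eval W R V (Conj a b) x = min (eval W R V a x) (eval W R V b x)"
| "eval W R V (Disj a b) x = max (eval W R V a x) (eval W R V b x)"
| "eval W R V (Fus a b) x = eval W R V a x + eval W R V b x"
| "eval W R V (Imp a b) x = eval W R V b x - eval W R V a x"
| "eval W R V Zero x = 0"
| "eval W R V (Box a) x =
     (let S = {eval W R V a y | y. y \<in> W \<and> (x, y) \<in> R}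
      in if S = {} then 0 else Inf S)"

definition KA_model :: "'w set \<Rightarrow> ('w \<times> 'w) set \<Rightarrow> (nat \<Rightarrow> 'w \<Rightarrow> real) \<Rightarrow> bool" where
  "KA_model W R V \<longleftrightarrow> W \<noteq> {} \<and> R \<subseteq> W \<times> W \<and>
     (\<exists>r::real. r \<ge> 0 \<and> (\<forall>p. \<forall>x\<in>W. V p x \<in> {-r..r}))"

text \<open>Validity over all models whose worlds are drawn from the type 'w
 (the main theorem quantifies over every type 'w, hence over all models).\<close>
definition KA_valid :: "'w itself \<Rightarrow> fm \<Rightarrow> bool" where
  "KA_valid _ \<phi> \<longleftrightarrow>
     (\<forall>(W::'w set) R V. KA_model W R V \<longrightarrow> (\<forall>x\<in>W. eval W R V \<phi> x \<ge> 0))"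

type_synonym lfm = "fm \<times> nat"

datatype rel = Gt | Ge

datatype node = Ineq "lfm multiset" rel "lfm multiset" | Rnode nat nat

fun node_labels :: "node \<Rightarrow> nat set" where
  "node_labels (Ineq G s D) = snd ` set_mset (G + D)"
| "node_labels (Rnode i j) = {i, j}"

definition branch_labels :: "node list \<Rightarrow> nat set" where
  "branch_labels B = \<Union> (node_labels ` set B)"

text \<open>rule_app B exts: a rule is applicable on branch B (premises occur on B) and
  yields the alternatives exts; a non-branching rule has one alternative (list of
  nodes added to B), a branching rule has two.\<close>
inductive rule_app :: "node list \<Rightarrow> node list list \<Rightarrow> bool" where
  zeroL: "Ineq (add_mset (Zero, i) G) s D \<in> set B \<Longrightarrow> rule_app B [[Ineq G s D]]"
| zeroR: "Ineq G s (add_mset (Zero, i) D) \<in> set B \<Longrightarrow> rule_app B [[Ineq G s D]]"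
| fusL: "Ineq (add_mset (Fus a b, i) G) s D \<in> set B \<Longrightarrow>
           rule_app B [[Ineq (add_mset (a, i) (add_mset (b, i) G)) s D]]"
| fusR: "Ineq G s (add_mset (Fus a b, i) D) \<in> set B \<Longrightarrow>
           rule_app B [[Ineq G s (add_mset (a, i) (add_mset (b, i) D))]]"
| impL: "Ineq (add_mset (Imp a b, i) G) s D \<in> set B \<Longrightarrow>
           rule_app B [[Ineq (add_mset (b, i) G) s (add_mset (a, i) D)]]"
| impR: "Ineq G s (add_mset (Imp a b, i) D) \<in> set B \<Longrightarrow>
           rule_app B [[Ineq (add_mset (a, i) G) s (add_mset (b, i) D)]]"
| conjL: "Ineq (add_mset (Conj a b, i) G) s D \<in> set B \<Longrightarrow>
           rule_app B [[Ineq (add_mset (a, i) G) s D, Ineq (add_mset (b, i) G) s D]]"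
| conjR: "Ineq G s (add_mset (Conj a b, i) D) \<in> set B \<Longrightarrow>
           rule_app B [[Ineq G s (add_mset (a, i) D)], [Ineq G s (add_mset (b, i) D)]]"
| disjL: "Ineq (add_mset (Disj a b, i) G) s D \<in> set B \<Longrightarrow>
           rule_app B [[Ineq (add_mset (a, i) G) s D], [Ineq (add_mset (b, i) G) s D]]"
| disjR: "Ineq G s (add_mset (Disj a b, i) D) \<in> set B \<Longrightarrow>
           rule_app B [[Ineq G s (add_mset (a, i) D), Ineq G s (add_mset (b, i) D)]]"
| boxL: "Rnode i j \<in> set B \<Longrightarrow> Ineq (add_mset (Box a, i) G) s D \<in> set B \<Longrightarrow>
           rule_app B [[Ineq {#(a, j)#} Ge {#(Box a, i)#}]]"
| boxR: "Ineq G s (add_mset (Box a, i) D) \<in> set B \<Longrightarrow> j \<notin> branch_labels B \<Longrightarrow>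
           rule_app B [[Ineq {#(Box a, i)#} Ge {#(a, j)#}, Rnode i j]]"
| ex: "Rnode i k \<in> set B \<Longrightarrow> j \<notin> branch_labels B \<Longrightarrow>
           rule_app B [[Rnode k j]]"

text \<open>A tableau is represented by the list of its branches (root-to-leaf node lists).\<close>
inductive tableau_for :: "fm \<Rightarrow> node list list \<Rightarrow> bool" where
  root: "tableau_for \<phi> [[Ineq {#} Gt {#(\<phi>, 1)#}, Rnode 1 2]]"
| step: "tableau_for \<phi> (Ts1 @ B # Ts2) \<Longrightarrow> rule_app B exts \<Longrightarrow>
           tableau_for \<phi> (Ts1 @ map (\<lambda>e. B @ e) exts @ Ts2)"

fun atomic_fm :: "fm \<Rightarrow> bool" where
  "atomic_fm (Atom p) = True"
| "atomic_fm (Box a) = True"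
| "atomic_fm _ = False"

fun holds_rel :: "rel \<Rightarrow> real \<Rightarrow> real \<Rightarrow> bool" where
  "holds_rel Gt x y = (x > y)"
| "holds_rel Ge x y = (x \<ge> y)"

definition solves :: "(lfm \<Rightarrow> real) \<Rightarrow> node list \<Rightarrow> bool" where
  "solves f B \<longleftrightarrow>
     (\<forall>G s D. Ineq G s D \<in> set B \<longrightarrow> (\<forall>l\<in>#G + D. atomic_fm (fst l)) \<longrightarrow>
        holds_rel s (\<Sum>l\<in>#G. f l) (\<Sum>l\<in>#D. f l))"

definition closed_branch :: "node list \<Rightarrow> bool" where
  "closed_branch B \<longleftrightarrow> \<not> (\<exists>f. solves f B)"

definition LKA_derivable :: "fm \<Rightarrow> bool" where
  "LKA_derivable \<phi> \<longleftrightarrow> (\<exists>T. tableau_for \<phi> T \<and> (\<forall>B\<in>set T. closed_branch B))"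

end

theory Submission
  imports Defs
begin

text \<open>Suppose the model M refutes \<phi> at x0, say V(\<phi>, x0) = -d < 0. Labels are mapped to
  worlds of M, starting with 1 \<mapsto> x0, and every tableau rule can be mirrored in M, so that
  some branch of any tableau for \<phi> has all its >-inequations true with margin d and all its
  \<open>\<ge>\<close>-inequations true up to a slack e > 0; the slack is the price of replacing the infimum in
  (\<open>\<rhd>\<Box>\<close>) by a nearly optimal successor. As the tableau has finitely many branches, a single
  branch admits such approximate solutions for every e, and these are bounded independently of e.
  A convergent subsequence then yields an exact solution, so that branch is not closed.\<close>

lemma finite_family_convergent_subseq:
  fixes F :: "nat \<Rightarrow> 'a \<Rightarrow> real"
  assumes "finite X" and "\<And>n x. \<bar>F n x\<bar> \<le> b x"
  shows "\<exists>\<sigma> L. strict_mono \<sigma> \<and> (\<forall>x\<in>X. (\<lambda>n. F (\<sigma> n) x) \<longlonglongrightarrow> L x)"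
  using assms(1)
proof (induction X rule: finite_induct)
  case empty
  show ?case by (rule exI[of _ id]) (auto simp: strict_mono_def)
next
  case (insert x X)
  then obtain \<sigma> L where \<sigma>: "strict_mono \<sigma>" "\<forall>y\<in>X. (\<lambda>n. F (\<sigma> n) y) \<longlonglongrightarrow> L y"
    by blast
  obtain \<tau> where \<tau>: "strict_mono \<tau>" "monoseq (\<lambda>n. F (\<sigma> (\<tau> n)) x)"
    using seq_monosub[of "\<lambda>n. F (\<sigma> n) x"] by blast
  have "Bseq (\<lambda>n. F (\<sigma> (\<tau> n)) x)"
    by (rule BseqI'[of _ "b x"]) (use assms(2) in auto)
  with \<tau>(2) obtain l where l: "(\<lambda>n. F (\<sigma> (\<tau> n)) x) \<longlonglongrightarrow> l"
    using Bseq_monoseq_convergent by (auto simp: convergent_def)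
  have "\<forall>y\<in>X. (\<lambda>n. F (\<sigma> (\<tau> n)) y) \<longlonglongrightarrow> L y"
    using LIMSEQ_subseq_LIMSEQ[OF _ \<tau>(1)] \<sigma>(2) by (auto simp: o_def)
  then show ?case
    using strict_mono_o[OF \<sigma>(1) \<tau>(1)] l
    by (intro exI[of _ "\<sigma> \<circ> \<tau>"] exI[of _ "L(x := l)"]) (auto simp: o_def)
qed

lemma tendsto_sum_mset:
  fixes F :: "nat \<Rightarrow> 'a \<Rightarrow> real"
  assumes "\<forall>l\<in>#G. (\<lambda>n. F n l) \<longlonglongrightarrow> L l"
  shows "(\<lambda>n. \<Sum>l\<in>#G. F n l) \<longlonglongrightarrow> (\<Sum>l\<in>#G. L l)"
  using assms by (induction G) (auto intro!: tendsto_add)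

lemma finite_pos_witness_uniform:
  fixes P :: "real \<Rightarrow> 'a \<Rightarrow> bool"
  assumes "finite A"
    and "\<And>e. e > 0 \<Longrightarrow> \<exists>x\<in>A. P e x"
    and "\<And>e e' x. P e x \<Longrightarrow> e \<le> e' \<Longrightarrow> P e' x"
  shows "\<exists>x\<in>A. \<forall>e>0. P e x"
proof (rule ccontr)
  assume "\<not> ?thesis"
  then obtain \<epsilon> where \<epsilon>: "\<And>x. x \<in> A \<Longrightarrow> \<epsilon> x > 0 \<and> \<not> P (\<epsilon> x) x"
    by metis
  define e where "e = Min (insert 1 (\<epsilon> ` A))"
  have "e > 0" using assms(1) \<epsilon> by (auto simp: e_def)
  then obtain x where "x \<in> A" "P e x" using assms(2) by blast
  moreover have "e \<le> \<epsilon> x" using \<open>x \<in> A\<close> assms(1) by (simp add: e_def)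
  ultimately show False using assms(3) \<epsilon> by blast
qed

definition holds_approx :: "real \<Rightarrow> real \<Rightarrow> rel \<Rightarrow> real \<Rightarrow> real \<Rightarrow> bool" where
  "holds_approx d e s x y \<longleftrightarrow> (case s of Gt \<Rightarrow> y + d \<le> x | Ge \<Rightarrow> y - e \<le> x)"

definition approx_solves :: "real \<Rightarrow> real \<Rightarrow> (lfm \<Rightarrow> real) \<Rightarrow> node list \<Rightarrow> bool" where
  "approx_solves d e f B \<longleftrightarrow>
     (\<forall>G s D. Ineq G s D \<in> set B \<longrightarrow> holds_approx d e s (\<Sum>l\<in>#G. f l) (\<Sum>l\<in>#D. f l))"

lemma approx_solves_mono: "approx_solves d e f B \<Longrightarrow> e \<le> e' \<Longrightarrow> approx_solves d e' f B"
  unfolding approx_solves_def holds_approx_def by (fastforce split: rel.splits)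

lemma solvable_if_approx_solvable_bounded:
  assumes d: "d > 0"
    and approx: "\<And>e. e > 0 \<Longrightarrow> \<exists>f. (\<forall>l. \<bar>f l\<bar> \<le> b l) \<and> approx_solves d e f B"
  shows "\<exists>f. solves f B"
proof -
  have "\<forall>n. \<exists>f. (\<forall>l. \<bar>f l\<bar> \<le> b l) \<and> approx_solves d (inverse (Suc n)) f B"
    using approx by simp
  then obtain F where F: "\<And>n. (\<forall>l. \<bar>F n l\<bar> \<le> b l) \<and> approx_solves d (inverse (Suc n)) (F n) B"
    by metis
  let ?X = "\<Union>n\<in>set B. case n of Ineq G s D \<Rightarrow> set_mset (G + D) | Rnode i j \<Rightarrow> {}"
  have "finite ?X" by (auto split: node.split)
  then obtain \<sigma> L where \<sigma>: "strict_mono \<sigma>" "\<forall>l\<in>?X. (\<lambda>n. F (\<sigma> n) l) \<longlonglongrightarrow> L l"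
    using finite_family_convergent_subseq[of ?X F b] F by blast
  have slack: "(\<lambda>n. inverse (real (Suc (\<sigma> n)))) \<longlonglongrightarrow> 0"
    using LIMSEQ_subseq_LIMSEQ[OF LIMSEQ_inverse_real_of_nat \<sigma>(1)] by (simp add: o_def)
  have "holds_rel s (\<Sum>l\<in>#G. L l) (\<Sum>l\<in>#D. L l)" if B: "Ineq G s D \<in> set B" for G s D
  proof -
    have lhs: "(\<lambda>n. \<Sum>l\<in>#G. F (\<sigma> n) l) \<longlonglongrightarrow> (\<Sum>l\<in>#G. L l)"
      and rhs: "(\<lambda>n. \<Sum>l\<in>#D. F (\<sigma> n) l) \<longlonglongrightarrow> (\<Sum>l\<in>#D. L l)"
      using \<sigma>(2) B by (auto intro!: tendsto_sum_mset)
    have approx_n: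
      "holds_approx d (inverse (Suc (\<sigma> n))) s (\<Sum>l\<in>#G. F (\<sigma> n) l) (\<Sum>l\<in>#D. F (\<sigma> n) l)" for n
      using F B by (auto simp: approx_solves_def)
    show ?thesis
    proof (cases s)
      case Gt
      have "(\<Sum>l\<in>#D. L l) + d \<le> (\<Sum>l\<in>#G. L l)"
        using approx_n Gt by (intro LIMSEQ_le[OF tendsto_add[OF rhs tendsto_const] lhs])
          (auto simp: holds_approx_def)
      then show ?thesis using Gt d by simp
    next
      case Ge
      have "(\<Sum>l\<in>#D. L l) - 0 \<le> (\<Sum>l\<in>#G. L l)"
        using approx_n Ge by (intro LIMSEQ_le[OF tendsto_diff[OF rhs slack] lhs])
          (auto simp: holds_approx_def)
      then show ?thesis using Ge by simp
    qed
  qed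
  then show ?thesis unfolding solves_def by blast
qed

primrec atom_count :: "fm \<Rightarrow> real" where
  "atom_count (Atom p) = 1"
| "atom_count (Conj a b) = atom_count a + atom_count b"
| "atom_count (Disj a b) = atom_count a + atom_count b"
| "atom_count (Fus a b) = atom_count a + atom_count b"
| "atom_count (Imp a b) = atom_count a + atom_count b"
| "atom_count Zero = 0"
| "atom_count (Box a) = atom_count a"

lemma atom_count_nonneg: "atom_count a \<ge> 0"
  by (induction a) auto

locale bounded_model =
  fixes W :: "'w set" and R :: "('w \<times> 'w) set" and V :: "nat \<Rightarrow> 'w \<Rightarrow> real" and r :: real
  assumes R_subset: "R \<subseteq> W \<times> W"
    and r_nonneg: "r \<ge> 0"
    and V_bound: "\<And>p x. x \<in> W \<Longrightarrow> \<bar>V p x\<bar> \<le> r"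
begin

definition succs :: "'w \<Rightarrow> 'w set" where
  "succs w = {y \<in> W. (w, y) \<in> R}"

lemma eval_Box:
  "eval W R V (Box a) w = (if succs w = {} then 0 else (INF y\<in>succs w. eval W R V a y))"
proof -
  have "{eval W R V a y | y. y \<in> W \<and> (w, y) \<in> R} = (\<lambda>y. eval W R V a y) ` succs w"
    by (auto simp: succs_def)
  then show ?thesis by (simp only: eval.simps Let_def image_is_empty)
qed

declare eval.simps(7) [simp del]

lemma bound_nonneg: "0 \<le> atom_count a * r"
  using atom_count_nonneg r_nonneg by simp

lemma eval_bound: "w \<in> W \<Longrightarrow> \<bar>eval W R V a w\<bar> \<le> atom_count a * r"
proof (induction a arbitrary: w)
  case (Box a)
  then have "\<bar>eval W R V a y\<bar> \<le> atom_count a * r" if "y \<in> succs w" for y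
    using that by (auto simp: succs_def)
  then show ?case using bound_nonneg[of a] by (auto simp: eval_Box intro!: cInf_abs_ge)
next
  case (Conj a b)
  show ?case using Conj.IH[OF Conj.prems] bound_nonneg[of a] bound_nonneg[of b]
    unfolding eval.simps atom_count.simps distrib_right by linarith
next
  case (Disj a b)
  show ?case using Disj.IH[OF Disj.prems] bound_nonneg[of a] bound_nonneg[of b]
    unfolding eval.simps atom_count.simps distrib_right by linarith
next
  case (Fus a b)
  show ?case using Fus.IH[OF Fus.prems] bound_nonneg[of a] bound_nonneg[of b]
    unfolding eval.simps atom_count.simps distrib_right by linarith
next
  case (Imp a b)
  show ?case using Imp.IH[OF Imp.prems] bound_nonneg[of a] bound_nonneg[of b]
    unfolding eval.simps atom_count.simps distrib_right by linarith
qed (simp_all add: V_bound)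

lemma bdd_below_eval_succs: "bdd_below ((\<lambda>y. eval W R V a y) ` succs w)"
  using eval_bound[of _ a]
  by (intro bdd_belowI[of _ "- atom_count a * r"]) (force simp: succs_def abs_le_iff)

text \<open>A label may also denote \<open>None\<close>, a fictitious world at which every formula has
  value 0. It is the only successor of a world without successors, which makes the value 0 of
  \<open>\<Box>\<close>-formulas there consistent with rules (\<open>\<Box>\<rhd>\<close>) and (\<open>\<rhd>\<Box>\<close>).\<close>

definition val :: "fm \<Rightarrow> 'w option \<Rightarrow> real" where
  "val a ow = (case ow of None \<Rightarrow> 0 | Some w \<Rightarrow> eval W R V a w)"

definition related :: "'w option \<Rightarrow> 'w option \<Rightarrow> bool" where
  "related ow ow' \<longleftrightarrow> (case ow of
      None \<Rightarrow> ow' = None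
    | Some w \<Rightarrow> (case ow' of None \<Rightarrow> succs w = {} | Some v \<Rightarrow> (w, v) \<in> R))"

lemma val_simps [simp]:
  "val (Conj a b) ow = min (val a ow) (val b ow)"
  "val (Disj a b) ow = max (val a ow) (val b ow)"
  "val (Fus a b) ow = val a ow + val b ow"
  "val (Imp a b) ow = val b ow - val a ow"
  "val Zero ow = 0"
  "val a None = 0"
  by (cases ow; simp add: val_def)+

lemma val_Box_le: "related ow ow' \<Longrightarrow> val (Box a) ow \<le> val a ow'"
  using R_subset bdd_below_eval_succs[of a]
  by (auto simp: related_def val_def eval_Box succs_def intro!: cInf_lower split: option.splits)

lemma ex_near_Box_successor:
  assumes "e > 0"
  shows "\<exists>ow'. related ow ow' \<and> set_option ow' \<subseteq> W \<and> val a ow' \<le> val (Box a) ow + e"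
proof (cases ow)
  case None
  then show ?thesis using assms by (auto simp: related_def)
next
  case (Some w)
  show ?thesis
  proof (cases "succs w = {}")
    case True
    then show ?thesis using Some assms
      by (intro exI[of _ None]) (auto simp: related_def val_def eval_Box)
  next
    case False
    have "(INF y\<in>succs w. eval W R V a y) < (INF y\<in>succs w. eval W R V a y) + e"
      using assms by simp
    then obtain v where "v \<in> succs w" "eval W R V a v < (INF y\<in>succs w. eval W R V a y) + e"
      using False bdd_below_eval_succs[of a] by (subst (asm) cInf_less_iff) auto
    then show ?thesis using Some False
      by (intro exI[of _ "Some v"]) (auto simp: related_def val_def eval_Box succs_def)
  qed
qed

definition label_val :: "(nat \<Rightarrow> 'w option) \<Rightarrow> lfm \<Rightarrow> real" where
  "label_val g l = val (fst l) (g (snd l))"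

fun node_sat :: "real \<Rightarrow> real \<Rightarrow> (nat \<Rightarrow> 'w option) \<Rightarrow> node \<Rightarrow> bool" where
  "node_sat d e g (Ineq G s D) \<longleftrightarrow>
     holds_approx d e s (\<Sum>l\<in>#G. label_val g l) (\<Sum>l\<in>#D. label_val g l)"
| "node_sat d e g (Rnode i j) \<longleftrightarrow> related (g i) (g j)"

definition realizes :: "real \<Rightarrow> real \<Rightarrow> (nat \<Rightarrow> 'w option) \<Rightarrow> node list \<Rightarrow> bool" where
  "realizes d e g B \<longleftrightarrow> (\<forall>n\<in>set B. node_sat d e g n) \<and> (\<forall>i. set_option (g i) \<subseteq> W)"

lemma realizes_append:
  "realizes d e g (B @ X) \<longleftrightarrow> realizes d e g B \<and> (\<forall>n\<in>set X. node_sat d e g n)"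
  by (auto simp: realizes_def)

lemma node_sat_cong:
  "(\<And>i. i \<in> node_labels n \<Longrightarrow> g' i = g i) \<Longrightarrow> node_sat d e g' n = node_sat d e g n"
proof (cases n)
  case (Ineq G s D)
  assume "\<And>i. i \<in> node_labels n \<Longrightarrow> g' i = g i"
  then have "label_val g' l = label_val g l" if "l \<in># G + D" for l
    using that Ineq by (force simp: label_val_def)
  then have "image_mset (label_val g') G = image_mset (label_val g) G"
    and "image_mset (label_val g') D = image_mset (label_val g) D"
    by (auto intro!: image_mset_cong)
  then show ?thesis using Ineq by simp
qed auto

lemma realizes_update_fresh:
  assumes "realizes d e g B" and "j \<notin> branch_labels B" and "set_option c \<subseteq> W"
  shows "realizes d e (g(j := c)) B"
proof -
  have "node_sat d e (g(j := c)) n = node_sat d e g n" if "n \<in> set B" for n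
    using assms(2) that by (intro node_sat_cong) (auto simp: branch_labels_def)
  then show ?thesis using assms(1,3) by (auto simp: realizes_def)
qed

lemma realizes_rule_app:
  assumes realizes: "realizes d e g B" and "e > 0" and "rule_app B exts"
  shows "\<exists>X\<in>set exts. \<exists>g'. realizes d e g' (B @ X)"
proof -
  have sat: "node_sat d e g n" if "n \<in> set B" for n
    using realizes that by (simp add: realizes_def)
  have same_assignment: ?thesis if "\<exists>X\<in>set exts. \<forall>n\<in>set X. node_sat d e g n"
    using realizes that by (auto simp: realizes_append)
  from assms(3) show ?thesis
  proof (cases rule: rule_app.cases)
    case (boxL i j a G s D)
    then have "val (Box a) (g i) \<le> val a (g j)"
      by (intro val_Box_le) (auto dest: sat)
    then show ?thesis using boxL \<open>e > 0\<close>
      by (intro same_assignment) (auto simp: holds_approx_def label_val_def)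
  next
    case (boxR G s a i D j)
    obtain c where c: "related (g i) c" "set_option c \<subseteq> W" "val a c \<le> val (Box a) (g i) + e"
      using ex_near_Box_successor[OF \<open>e > 0\<close>] by blast
    have "i \<noteq> j" using boxR by (force simp: branch_labels_def)
    then have "realizes d e (g(j := c)) (B @ [Ineq {#(Box a, i)#} Ge {#(a, j)#}, Rnode i j])"
      using realizes_update_fresh[OF realizes boxR(3) c(2)] c
      by (auto simp: realizes_append holds_approx_def label_val_def)
    then show ?thesis using boxR by auto
  next
    case (ex i k j)
    obtain c where c: "related (g k) c" "set_option c \<subseteq> W"
      using ex_near_Box_successor[OF \<open>e > 0\<close>] by blast
    have "k \<noteq> j" using ex by (force simp: branch_labels_def)
    then have "realizes d e (g(j := c)) (B @ [Rnode k j])"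
      using realizes_update_fresh[OF realizes ex(3) c(2)] c by (auto simp: realizes_append)
    then show ?thesis using ex by auto
  qed (rule same_assignment; auto dest!: sat
      simp: holds_approx_def label_val_def ac_simps min_def max_def split: rel.splits if_split_asm)+
qed

lemma tableau_realized:
  assumes "tableau_for \<phi> T" and "x0 \<in> W" and "eval W R V \<phi> x0 \<le> - d" and "e > 0"
  shows "\<exists>B\<in>set T. \<exists>g. realizes d e g B"
  using assms(1,3)
proof (induction rule: tableau_for.induct)
  case (root \<phi>)
  obtain c where "related (Some x0) c" "set_option c \<subseteq> W"
    using ex_near_Box_successor[OF \<open>e > 0\<close>] by blast
  then have "realizes d e ((\<lambda>_. None)(1 := Some x0, 2 := c)) [Ineq {#} Gt {#(\<phi>, 1)#}, Rnode 1 2]"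
    using root \<open>x0 \<in> W\<close> by (auto simp: realizes_def holds_approx_def label_val_def val_def)
  then show ?case by auto
next
  case (step \<phi> Ts1 B Ts2 exts)
  then obtain B' g where B': "B' \<in> set (Ts1 @ B # Ts2)" "realizes d e g B'"
    by blast
  show ?case
  proof (cases "B' = B")
    case True
    then obtain X g' where "X \<in> set exts" "realizes d e g' (B @ X)"
      using realizes_rule_app[OF _ \<open>e > 0\<close> step.hyps(2)] B' by blast
    then show ?thesis by auto
  next
    case False
    then show ?thesis using B' by auto
  qed
qed

lemma realizes_approx_solves: "realizes d e g B \<Longrightarrow> approx_solves d e (label_val g) B"
  by (auto simp: realizes_def approx_solves_def)

lemma realizes_label_val_bound:
  assumes "realizes d e g B"
  shows "\<bar>label_val g l\<bar> \<le> atom_count (fst l) * r"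
proof (cases "g (snd l)")
  case None
  then show ?thesis using bound_nonneg by (simp add: label_val_def)
next
  case (Some w)
  with assms have "w \<in> W" by (auto simp: realizes_def)
  then show ?thesis using Some eval_bound by (simp add: label_val_def val_def)
qed

lemma tableau_has_open_branch:
  assumes "tableau_for \<phi> T" and "x0 \<in> W" and "eval W R V \<phi> x0 < 0"
  shows "\<exists>B\<in>set T. \<not> closed_branch B"
proof -
  define d where "d = - eval W R V \<phi> x0"
  let ?approx = "\<lambda>e B. \<exists>f. (\<forall>l. \<bar>f l\<bar> \<le> atom_count (fst l) * r) \<and> approx_solves d e f B"
  have "\<exists>B\<in>set T. \<forall>e>0. ?approx e B"
  proof (rule finite_pos_witness_uniform)
    fix e :: real
    assume "e > 0"
    then obtain B g where "B \<in> set T" "realizes d e g B"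
      using tableau_realized[OF assms(1,2), of d e] by (auto simp: d_def)
    then show "\<exists>B\<in>set T. ?approx e B"
      using realizes_approx_solves realizes_label_val_bound by blast
  qed (auto intro: approx_solves_mono)
  moreover have "d > 0" using assms(3) by (simp add: d_def)
  ultimately obtain B where "B \<in> set T" "\<exists>f. solves f B"
    using solvable_if_approx_solvable_bounded[where b = "\<lambda>l. atom_count (fst l) * r"] by blast
  then show ?thesis by (auto simp: closed_branch_def)
qed

end

lemma KA_model_imp_bounded_model: "KA_model W R V \<Longrightarrow> \<exists>r. bounded_model W R V r"
  unfolding KA_model_def bounded_model_def by (metis abs_le_iff atLeastAtMost_iff minus_le_iff)

theorem proposition3p4:
  fixes \<phi> :: fm
  assumes "LKA_derivable \<phi>"
  shows "KA_valid (TYPE('w)) \<phi>"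
  unfolding KA_valid_def
proof (intro allI impI ballI)
  fix W :: "'w set" and R V x
  assume "KA_model W R V" and "x \<in> W"
  then obtain r where "bounded_model W R V r"
    using KA_model_imp_bounded_model by blast
  moreover obtain T where "tableau_for \<phi> T" and "\<forall>B\<in>set T. closed_branch B"
    using assms by (auto simp: LKA_derivable_def)
  ultimately show "0 \<le> eval W R V \<phi> x"
    using bounded_model.tableau_has_open_branch \<open>x \<in> W\<close> by (meson not_le)
qed

end
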